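(* For every $q>0$, every $n\in\mathbb{N}$ and all $k,\ell\in\mathbb{Z}_+^n$, $$\frac{[|k+\ell|]_q!}{[k+\ell]_q!}\ \ge\ \frac{[|k|]_q!}{[k]_q!}\cdot\frac{[|\ell|]_q!}{[\ell]_q!}\cdot q^{\sum_{i<j}k_i\ell_j}.$$
   Context: For $q\in\mathbb{C}\setminus\{0\}$ and $m\in\mathbb{N}$: $[m]_q=1+q+\dots+q^{m-1}$, $[m]_q!=[1]_q[2]_q\cdots[m]_q$, $[0]_q!=1$. For $k=(k_1,\dots,k_n)\in\mathbb{Z}_+^n$: $[k]_q!=[k_1]_q!\cdots[k_n]_q!$ and $|k|=k_1+\dots+k_n$. *)

theory Defs
  imports Complex_Main
begin

definition qint :: "real \<Rightarrow> nat \<Rightarrow> real" where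
  "qint q m = (\<Sum>i<m. q ^ i)"

definition qfact :: "real \<Rightarrow> nat \<Rightarrow> real" where
  "qfact q m = (\<Prod>j\<in>{1..m}. qint q j)"

text \<open>Multi-index q-factorial [k]_q! = [k_1]_q! ... [k_n]_q!,
  for k in Z_+^n represented as a function on indices {0..<n}.\<close>
definition mqfact :: "real \<Rightarrow> nat \<Rightarrow> (nat \<Rightarrow> nat) \<Rightarrow> real" where
  "mqfact q n k = (\<Prod>i<n. qfact q (k i))"

definition mabs :: "nat \<Rightarrow> (nat \<Rightarrow> nat) \<Rightarrow> nat" where
  "mabs n k = (\<Sum>i<n. k i)"

end

theory Submission
  imports Defs
begin

text \<open>The quotient \<open>[|k|]\<^sub>q! / [k]\<^sub>q!\<close> is a q-multinomial coefficient, and adding one more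
  coordinate multiplies it by a Gaussian binomial coefficient. The theorem thus reduces, by induction
  on \<open>n\<close>, to the supermultiplicativity
  \<open>[a+b, a]\<^sub>q [c+d, c]\<^sub>q q\<^bsup>ad\<^esup> \<le> [a+c+b+d, a+c]\<^sub>q\<close> of Gaussian binomials, which follows by
  induction on \<open>a + b\<close> from the q-Pascal recurrence, all of whose terms are nonnegative.\<close>

lemma qint_add: "qint q (m + n) = qint q m + q ^ m * qint q n"
  by (induction n) (auto simp: qint_def power_add algebra_simps)

lemma qint_pos: "0 \<le> q \<Longrightarrow> 0 < m \<Longrightarrow> 0 < qint q m"
  unfolding qint_def by (rule sum_pos2[of _ 0]) auto

lemma qfact_0 [simp]: "qfact q 0 = 1"
  by (simp add: qfact_def)

lemma qfact_Suc: "qfact q (Suc m) = qfact q m * qint q (Suc m)"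
proof -
  have "{1..Suc m} = insert (Suc m) {1..m}" by auto
  then show ?thesis by (simp add: qfact_def mult.commute)
qed

lemma qfact_pos: "0 \<le> q \<Longrightarrow> 0 < qfact q m"
  by (induction m) (auto simp: qfact_Suc qint_pos)

text \<open>\<open>qbinom q a b\<close> is the Gaussian binomial \<open>[a+b, a]\<^sub>q\<close>, indexed by the two parts \<open>a\<close> and \<open>b\<close>
  of \<open>a + b\<close> so that the q-Pascal recurrence needs no subtraction.\<close>
fun qbinom :: "real \<Rightarrow> nat \<Rightarrow> nat \<Rightarrow> real" where
  "qbinom q 0 b = 1"
| "qbinom q (Suc a) 0 = 1"
| "qbinom q (Suc a) (Suc b) = qbinom q (Suc a) b + q ^ Suc b * qbinom q a (Suc b)"

lemma qbinom_0_right [simp]: "qbinom q a 0 = 1"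
  by (cases a) auto

lemma qbinom_pos: "0 \<le> q \<Longrightarrow> 0 < qbinom q a b"
  by (induction q a b rule: qbinom.induct) (auto intro: add_pos_nonneg)

lemma qbinom_qfact: "qbinom q a b * qfact q a * qfact q b = qfact q (a + b)"
proof (induction q a b rule: qbinom.induct)
  case (3 q a b)
  have qint_split: "qint q (Suc (Suc (a + b))) = qint q (Suc b) + q ^ Suc b * qint q (Suc a)"
    using qint_add[of q "Suc b" "Suc a"] by (simp add: add.commute)
  have "qbinom q (Suc a) (Suc b) * qfact q (Suc a) * qfact q (Suc b)
      = (qbinom q (Suc a) b * qfact q (Suc a) * qfact q b) * qint q (Suc b)
        + q ^ Suc b * (qbinom q a (Suc b) * qfact q a * qfact q (Suc b)) * qint q (Suc a)"
    by (simp add: qfact_Suc[of q a] qfact_Suc[of q b] algebra_simps)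
  also have "\<dots> = qfact q (Suc (a + b)) * qint q (Suc (Suc (a + b)))"
    using 3 by (simp add: qint_split algebra_simps)
  also have "\<dots> = qfact q (Suc a + Suc b)"
    by (simp add: qfact_Suc)
  finally show ?case .
qed simp_all

lemma qbinom_nonneg: "0 \<le> q \<Longrightarrow> 0 \<le> qbinom q a b"
  using qbinom_pos less_imp_le by blast

lemma qbinom_mono_right:
  assumes "0 \<le> q" "b \<le> b'"
  shows "qbinom q a b \<le> qbinom q a b'"
  using assms(2)
proof (induction b' rule: dec_induct)
  case (step b')
  have "qbinom q a b' \<le> qbinom q a (Suc b')"
    using qbinom_nonneg \<open>0 \<le> q\<close> by (cases a) auto
  with step.IH show ?case by simp
qed simp

lemma qbinom_Suc_left_ge: "0 \<le> q \<Longrightarrow> q ^ b * qbinom q a b \<le> qbinom q (Suc a) b"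
  using qbinom_nonneg[of q "Suc a"] by (cases b) auto

lemma qbinom_add_left_ge: "0 \<le> q \<Longrightarrow> q ^ (a * b) * qbinom q c b \<le> qbinom q (a + c) b"
proof (induction a)
  case (Suc a)
  have "q ^ (Suc a * b) * qbinom q c b = q ^ b * (q ^ (a * b) * qbinom q c b)"
    by (simp add: power_add)
  also have "\<dots> \<le> q ^ b * qbinom q (a + c) b"
    using Suc by (simp add: mult_left_mono)
  also have "\<dots> \<le> qbinom q (Suc a + c) b"
    using qbinom_Suc_left_ge[OF Suc.prems] by simp
  finally show ?case .
qed simp

lemma qbinom_supermult:
  assumes q: "0 \<le> q"
  shows "qbinom q a b * qbinom q c d * q ^ (a * d) \<le> qbinom q (a + c) (b + d)"
proof (induction "a + b" arbitrary: a b rule: less_induct)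
  case less
  consider "a = 0" | "b = 0" | a' b' where "a = Suc a'" "b = Suc b'"
    by (metis not0_implies_Suc)
  then show ?case
  proof cases
    case 1
    then show ?thesis using qbinom_mono_right[OF q, of d "b + d" c] by simp
  next
    case 2
    then show ?thesis using qbinom_add_left_ge[OF q, of a d c] by (simp add: mult.commute)
  next
    case 3
    have IH_b: "qbinom q a b' * qbinom q c d * q ^ (a * d) \<le> qbinom q (a + c) (b' + d)"
      using less[of a b'] 3 by simp
    have IH_a: "qbinom q a' b * qbinom q c d * q ^ (a' * d) \<le> qbinom q (a' + c) (b + d)"
      using less[of a' b] 3 by simp
    have "qbinom q a b * qbinom q c d * q ^ (a * d)
        = qbinom q a b' * qbinom q c d * q ^ (a * d)
          + q ^ Suc (b' + d) * (qbinom q a' b * qbinom q c d * q ^ (a' * d))"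
      using 3 by (simp add: algebra_simps power_add)
    also have "\<dots> \<le> qbinom q (a + c) (b' + d) + q ^ Suc (b' + d) * qbinom q (a' + c) (b + d)"
      using IH_a IH_b q by (intro add_mono mult_left_mono) auto
    also have "\<dots> = qbinom q (a + c) (b + d)"
      using 3 by simp
    finally show ?thesis .
  qed
qed

definition qmultinom :: "real \<Rightarrow> nat \<Rightarrow> (nat \<Rightarrow> nat) \<Rightarrow> real" where
  "qmultinom q n k = qfact q (mabs n k) / mqfact q n k"

lemma mqfact_pos: "0 \<le> q \<Longrightarrow> 0 < mqfact q n k"
  by (simp add: mqfact_def qfact_pos prod_pos)

lemma qmultinom_nonneg: "0 \<le> q \<Longrightarrow> 0 \<le> qmultinom q n k"
  by (simp add: qmultinom_def qfact_pos mqfact_pos less_imp_le)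

lemma qmultinom_0 [simp]: "qmultinom q 0 k = 1"
  by (simp add: qmultinom_def mabs_def mqfact_def)

lemma qmultinom_Suc:
  assumes "0 \<le> q"
  shows "qmultinom q (Suc n) k = qmultinom q n k * qbinom q (mabs n k) (k n)"
proof -
  have "qfact q (mabs (Suc n) k) = qbinom q (mabs n k) (k n) * qfact q (mabs n k) * qfact q (k n)"
    using qbinom_qfact[of q "mabs n k" "k n"] by (simp add: mabs_def)
  moreover have "mqfact q (Suc n) k = mqfact q n k * qfact q (k n)"
    by (simp add: mqfact_def)
  ultimately show ?thesis
    using qfact_pos[OF assms, of "k n"] mqfact_pos[OF assms, of n k]
    by (simp add: qmultinom_def field_simps)
qed

lemma mabs_add: "mabs n (\<lambda>i. k i + l i) = mabs n k + mabs n l"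
  by (simp add: mabs_def sum.distrib)

lemma sum_less_pairs_Suc:
  "(\<Sum>i<Suc n. \<Sum>j<Suc n. if i < j then k i * l j else 0)
   = (\<Sum>i<n. \<Sum>j<n. if i < j then k i * l j else 0) + mabs n k * l n"
  by (simp add: mabs_def sum.distrib sum_distrib_right)

lemma qmultinom_supermult:
  assumes q: "0 \<le> q"
  shows "qmultinom q n k * qmultinom q n l * q ^ (\<Sum>i<n. \<Sum>j<n. if i < j then k i * l j else 0)
     \<le> qmultinom q n (\<lambda>i. k i + l i)"
proof (induction n)
  case (Suc n)
  let ?E = "\<Sum>i<n. \<Sum>j<n. if i < j then k i * l j else 0"
  let ?Bk = "qbinom q (mabs n k) (k n)" and ?Bl = "qbinom q (mabs n l) (l n)"
  have "qmultinom q (Suc n) k * qmultinom q (Suc n) l * q ^ (?E + mabs n k * l n)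
      = (qmultinom q n k * qmultinom q n l * q ^ ?E) * (?Bk * ?Bl * q ^ (mabs n k * l n))"
    by (simp add: qmultinom_Suc[OF q] power_add algebra_simps)
  also have "\<dots> \<le> qmultinom q n (\<lambda>i. k i + l i) * qbinom q (mabs n k + mabs n l) (k n + l n)"
    using Suc qbinom_supermult[OF q] q qmultinom_nonneg[OF q] qbinom_nonneg[OF q]
    by (intro mult_mono) auto
  also have "\<dots> = qmultinom q (Suc n) (\<lambda>i. k i + l i)"
    by (simp add: qmultinom_Suc[OF q] mabs_add)
  finally show ?case
    unfolding sum_less_pairs_Suc .
qed simp

theorem lemma3p7:
  fixes q :: real and n :: nat and k l :: "nat \<Rightarrow> nat"
  assumes "q > 0"
  shows "qfact q (mabs n (\<lambda>i. k i + l i)) / mqfact q n (\<lambda>i. k i + l i)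
     \<ge> (qfact q (mabs n k) / mqfact q n k) * (qfact q (mabs n l) / mqfact q n l)
        * q ^ (\<Sum>i<n. \<Sum>j<n. if i < j then k i * l j else 0)"
  using qmultinom_supermult[of q n k l] assms by (simp add: qmultinom_def)

end
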